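(* Let $b>1$ and consider on $M_h$ with $2h=1$ the reduced prolate integrable system $(\ell_{23},G_{pro})$, where $G_{pro}=b\ell_{12}^2+b\ell_{13}^2+\ell_{14}^2$. The image of the momentum map $(\ell_{23},G_{pro}):M_h\to\mathbb R^2$ is the region bounded by the curve $\mathcal P_1: G_{pro}=b(1-\ell_{23}^2)$ and the line $\mathcal P_2: G_{pro}=0$. There is an isolated critical value at $(\ell_{23},G_{pro})=(0,1)$.
   Context: $\mathbf L=(\ell_{12},\ell_{13},\ell_{14},\ell_{23},\ell_{24},\ell_{34})\in\mathbb R^6\cong\mathfrak{so}(4)^*$ with the Lie–Poisson bracket of $\mathfrak{so}(4)$ (extending $\ell_{ji}=-\ell_{ij}$: $\{\ell_{ij},\ell_{jk}\}=-\ell_{ik}$ for distinct $i,j,k$, and $\{\ell_{ij},\ell_{kl}\}=0$ when $\{i,j\}\cap\{k,l\}=\emptyset$); equivalently $\ell_{ij}=x_iy_j-x_jy_i$ with canonical bracket on $T^*\mathbb R^4$. $M_h=\{\mathbf L:\sum_{i<j}\ell_{ij}^2=2h,\ \ell_{12}\ell_{34}-\ell_{13}\ell_{24}+\ell_{14}\ell_{23}=0\}\cong S^2\times S^2$ is a symplectic leaf. This system arises from separating the geodesic flow on $S^3$ in prolate coordinates (ellipsoidal parameters $(0,1,1,b)$). *)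

theory Defs
  imports "HOL-Analysis.Analysis"
begin

text \<open>A point L of so(4)* = R^6, coordinates ordered
  (l12, l13, l14, l23, l24, l34) as components 1..6 of a vector in real^6.\<close>

type_synonym so4 = "real ^ 6"

definition l12 :: "so4 \<Rightarrow> real" where "l12 L = L $ 1"
definition l13 :: "so4 \<Rightarrow> real" where "l13 L = L $ 2"
definition l14 :: "so4 \<Rightarrow> real" where "l14 L = L $ 3"
definition l23 :: "so4 \<Rightarrow> real" where "l23 L = L $ 4"
definition l24 :: "so4 \<Rightarrow> real" where "l24 L = L $ 5"
definition l34 :: "so4 \<Rightarrow> real" where "l34 L = L $ 6"

definition casimir_norm :: "so4 \<Rightarrow> real" where
  "casimir_norm L = (l12 L)^2 + (l13 L)^2 + (l14 L)^2 + (l23 L)^2 + (l24 L)^2 + (l34 L)^2"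

definition casimir_pf :: "so4 \<Rightarrow> real" where
  "casimir_pf L = l12 L * l34 L - l13 L * l24 L + l14 L * l23 L"

definition Mh :: "real \<Rightarrow> so4 set" where
  "Mh h = {L. casimir_norm L = 2 * h \<and> casimir_pf L = 0}"

definition Gpro :: "real \<Rightarrow> so4 \<Rightarrow> real" where
  "Gpro b L = b * (l12 L)^2 + b * (l13 L)^2 + (l14 L)^2"

definition momentum :: "real \<Rightarrow> so4 \<Rightarrow> real \<times> real" where
  "momentum b L = (l23 L, Gpro b L)"

text \<open>Tangent space of M_h at p (M_h is the regular common level set of the
  two Casimirs; the level value does not enter).\<close>
definition tangent_space :: "so4 \<Rightarrow> so4 set" where
  "tangent_space p = {v. frechet_derivative casimir_norm (at p) v = 0
                        \<and> frechet_derivative casimir_pf (at p) v = 0}"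

definition critical_point :: "real \<Rightarrow> real \<Rightarrow> so4 \<Rightarrow> bool" where
  "critical_point b h p \<longleftrightarrow> p \<in> Mh h \<and>
     frechet_derivative (momentum b) (at p) ` tangent_space p \<noteq> UNIV"

definition critical_value :: "real \<Rightarrow> real \<Rightarrow> real \<times> real \<Rightarrow> bool" where
  "critical_value b h c \<longleftrightarrow> (\<exists>p. critical_point b h p \<and> momentum b p = c)"

definition isolated_critical_value :: "real \<Rightarrow> real \<Rightarrow> real \<times> real \<Rightarrow> bool" where
  "isolated_critical_value b h c \<longleftrightarrow> critical_value b h c \<and>
     (\<exists>e>0. \<forall>c'. c' \<noteq> c \<and> dist c' c < e \<longrightarrow> \<not> critical_value b h c')"

end

theory Submission
  imports Defs
begin

text \<open>
  In the coordinates of so(4)* the Pfaffian Casimir is half of \<open>L \<bullet> \<star>L\<close>, where \<open>\<star>\<close> is the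
  Hodge star of the second exterior power of R^4, so the leaf M_(1/2) consists of the unit vectors
  L with \<open>L \<bullet> \<star>L = 0\<close> and the Casimir gradients L and \<open>\<star>L\<close> are orthonormal there.
  Using the norm Casimir, \<open>b(1 - l23^2) - G = (b - 1) l14^2 + b (l24^2 + l34^2)\<close>, which gives
  the image of the momentum map; both bounds are attained on the slice l13 = l14 = l34 = 0.
  At a critical point some nonzero combination \<open>\<alpha> dl23 + \<beta> dG\<close> vanishes on the tangent
  space, hence equals \<open>\<mu> L + \<nu> \<star>L\<close> (Lagrange multipliers). Solving these six equations
  puts every critical value on G = 0, on G = b(1 - l23^2), or at (0, 1), the image of l14 = 1.
  The two curves form a closed set missing (0, 1), so that value is isolated.
\<close>

lemma exhaust_6:
  fixes i :: 6
  shows "i = 1 \<or> i = 2 \<or> i = 3 \<or> i = 4 \<or> i = 5 \<or> i = 6"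
proof (induct i)
  case (of_int z)
  then have "z = 0 \<or> z = 1 \<or> z = 2 \<or> z = 3 \<or> z = 4 \<or> z = 5"
    by fastforce
  then show ?case
    by auto
qed

lemma UNIV_6: "UNIV = {1, 2, 3, 4, 5, 6::6}"
  using exhaust_6 by auto

lemma sum_6: "sum f (UNIV::6 set) = f 1 + f 2 + f 3 + f 4 + f 5 + f 6"
  unfolding UNIV_6 by (simp add: ac_simps)

lemma inner_so4:
  "x \<bullet> y = x$1 * y$1 + x$2 * y$2 + x$3 * y$3 + x$4 * y$4 + x$5 * y$5 + x$6 * y$6"
  for x y :: so4
  by (simp add: inner_vec_def sum_6)

definition so4_vec :: "real \<Rightarrow> real \<Rightarrow> real \<Rightarrow> real \<Rightarrow> real \<Rightarrow> real \<Rightarrow> so4" where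
  "so4_vec x1 x2 x3 x4 x5 x6 = (\<chi> i. if i = 1 then x1 else if i = 2 then x2 else if i = 3 then x3
     else if i = 4 then x4 else if i = 5 then x5 else x6)"

lemma so4_vec_nth [simp]:
  "so4_vec x1 x2 x3 x4 x5 x6 $ 1 = x1" "so4_vec x1 x2 x3 x4 x5 x6 $ 2 = x2"
  "so4_vec x1 x2 x3 x4 x5 x6 $ 3 = x3" "so4_vec x1 x2 x3 x4 x5 x6 $ 4 = x4"
  "so4_vec x1 x2 x3 x4 x5 x6 $ 5 = x5" "so4_vec x1 x2 x3 x4 x5 x6 $ 6 = x6"
  by (simp_all add: so4_vec_def)

definition hodge_star :: "so4 \<Rightarrow> so4" where
  "hodge_star L = so4_vec (L$6) (- L$5) (L$4) (L$3) (- L$2) (L$1)"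

lemma linear_hodge_star: "linear hodge_star"
  by (rule linearI) (simp_all add: hodge_star_def so4_vec_def vec_eq_iff)

lemma inner_hodge_star_left: "hodge_star x \<bullet> y = x \<bullet> hodge_star y"
  by (simp add: inner_so4 hodge_star_def algebra_simps)

lemma inner_hodge_star_hodge_star [simp]: "hodge_star x \<bullet> hodge_star x = x \<bullet> x"
  by (simp add: inner_so4 hodge_star_def algebra_simps)

lemma casimir_norm_eq_inner: "casimir_norm L = L \<bullet> L"
  by (simp add: casimir_norm_def inner_so4 power2_eq_square
      l12_def l13_def l14_def l23_def l24_def l34_def)

lemma casimir_pf_eq_inner: "casimir_pf L = L \<bullet> hodge_star L / 2"
  by (simp add: casimir_pf_def inner_so4 hodge_star_def
      l12_def l13_def l14_def l23_def l24_def l34_def)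

lemma Mh_half_iff: "p \<in> Mh (1/2) \<longleftrightarrow> p \<bullet> p = 1 \<and> p \<bullet> hodge_star p = 0"
  by (simp add: Mh_def casimir_norm_eq_inner casimir_pf_eq_inner)

lemma has_derivative_so4_nth: "((\<lambda>x::so4. x $ i) has_derivative (\<lambda>v. v $ i)) F"
  by (simp add: bounded_linear_imp_has_derivative bounded_linear_vec_nth)

lemma has_derivative_casimir_norm:
  "(casimir_norm has_derivative (\<lambda>v. 2 * (p \<bullet> v))) (at p)"
proof (rule has_derivative_eq_rhs)
  show "(casimir_norm has_derivative (\<lambda>v. p \<bullet> v + v \<bullet> p)) (at p)"
    unfolding casimir_norm_eq_inner[abs_def] by (intro has_derivative_inner has_derivative_ident)
qed (simp add: inner_commute fun_eq_iff)

lemma has_derivative_casimir_pf: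
  "(casimir_pf has_derivative (\<lambda>v. hodge_star p \<bullet> v)) (at p)"
proof (rule has_derivative_eq_rhs)
  have "((\<lambda>L. L \<bullet> hodge_star L) has_derivative (\<lambda>v. p \<bullet> hodge_star v + v \<bullet> hodge_star p)) (at p)"
    by (intro has_derivative_inner has_derivative_ident linear_imp_has_derivative linear_hodge_star)
  then show "(casimir_pf has_derivative (\<lambda>v. (p \<bullet> hodge_star v + v \<bullet> hodge_star p) / 2)) (at p)"
    unfolding casimir_pf_eq_inner[abs_def]
    by (rule bounded_linear.has_derivative[OF bounded_linear_divide])
qed (simp add: fun_eq_iff inner_hodge_star_left[of p, symmetric] inner_commute[of _ "hodge_star p"])

lemma has_derivative_momentum:
  "(momentum b has_derivative
     (\<lambda>v. (v$4, 2*b*p$1 * v$1 + 2*b*p$2 * v$2 + 2*p$3 * v$3))) (at p)"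
  unfolding momentum_def[abs_def] Gpro_def l12_def l13_def l14_def l23_def
  by (rule derivative_eq_intros has_derivative_so4_nth refl | simp)+ (simp add: algebra_simps)

lemma tangent_space_eq: "tangent_space p = {v. p \<bullet> v = 0 \<and> hodge_star p \<bullet> v = 0}"
  by (simp add: tangent_space_def frechet_derivative_at[OF has_derivative_casimir_norm, symmetric]
      frechet_derivative_at[OF has_derivative_casimir_pf, symmetric])

lemma subspace_tangent_space: "subspace (tangent_space p)"
proof -
  have "tangent_space p = {v. p \<bullet> v = 0} \<inter> {v. hodge_star p \<bullet> v = 0}"
    by (auto simp: tangent_space_eq)
  then show ?thesis
    by (simp add: subspace_inter subspace_hyperplane)
qed

lemma exists_annihilator_if_image_not_UNIV:
  fixes f :: "'a::euclidean_space \<Rightarrow> 'b::euclidean_space"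
  assumes "linear f" "subspace T" "f ` T \<noteq> UNIV"
  shows "\<exists>w. w \<noteq> 0 \<and> (\<forall>v\<in>T. w \<bullet> f v = 0)"
proof -
  have "span (f ` T) = f ` T"
    using assms(1,2) by (simp add: linear_subspace_image)
  then have "dim (f ` T) \<noteq> DIM('b)"
    using assms(3) dim_eq_full by metis
  then have "dim (f ` T) < DIM('b)"
    using dim_subset_UNIV[of "f ` T"] by linarith
  then obtain w where "w \<noteq> 0" "\<And>y. y \<in> span (f ` T) \<Longrightarrow> orthogonal w y"
    using orthogonal_to_subspace_exists by blast
  then show ?thesis
    by (auto simp: orthogonal_def intro: span_base)
qed

lemma eq_combination_if_orthogonal_complement:
  fixes u u' w :: "'a::real_inner"
  assumes "u \<bullet> u = 1" "u' \<bullet> u' = 1" "u \<bullet> u' = 0"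
    and "\<And>v. u \<bullet> v = 0 \<Longrightarrow> u' \<bullet> v = 0 \<Longrightarrow> w \<bullet> v = 0"
  shows "w = (w \<bullet> u) *\<^sub>R u + (w \<bullet> u') *\<^sub>R u'"
proof -
  define r where "r = w - (w \<bullet> u) *\<^sub>R u - (w \<bullet> u') *\<^sub>R u'"
  have "u \<bullet> r = 0" "u' \<bullet> r = 0"
    using assms(1-3) by (simp_all add: r_def inner_diff_right inner_commute)
  moreover from this have "w \<bullet> r = 0"
    by (rule assms(4))
  ultimately have "r \<bullet> r = 0"
    by (simp add: r_def inner_diff_left inner_commute)
  then have "r = 0"
    by simp
  then show ?thesis
    by (simp add: r_def algebra_simps)
qed

lemma regular_2x2_system_eq_0:
  fixes c \<mu> \<nu> x y :: real
  assumes "c*x = \<mu>*x + \<nu>*y" "0 = \<mu>*y + \<nu>*x" "(c - \<mu>)*\<mu> + \<nu>^2 \<noteq> 0"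
  shows "x = 0" "y = 0"
proof -
  have "x * ((c - \<mu>)*\<mu> + \<nu>^2) = 0" "y * ((c - \<mu>)*\<mu> + \<nu>^2) = 0"
    using assms(1,2) by algebra+
  with assms(3) show "x = 0" "y = 0"
    by simp_all
qed

lemma prolate_lagrange_degenerate:
  fixes a1 a2 a3 a4 a5 a6 \<beta> \<mu> \<nu> b :: real
  assumes b: "b \<ge> 1"
    and P: "a1*a6 - a2*a5 + a3*a4 = 0"
    and E3: "2*\<beta>*a3 = \<mu>*a3 + \<nu>*a4" and E5: "0 = \<mu>*a5 - \<nu>*a2" and E6: "0 = \<mu>*a6 + \<nu>*a1"
    and D0: "(2*b*\<beta> - \<mu>)*\<mu> + \<nu>^2 = 0" and "\<nu> \<noteq> 0"
  shows "a1 = 0 \<and> a2 = 0 \<and> a3 = 0 \<and> a4 = 0 \<and> a5 = 0 \<and> a6 = 0"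
proof -
  have "\<mu> \<noteq> 0"
    using D0 \<open>\<nu> \<noteq> 0\<close> by auto
  have "\<mu>*a3*a4 = \<nu>*(a1^2 + a2^2)"
    using P E5 E6 by algebra
  then have C: "((1-b)*\<mu>^2 - \<nu>^2)*a3^2 = b*\<nu>^2*(a1^2 + a2^2)"
    using E3 D0 by algebra
  have "(1-b)*\<mu>^2 \<le> 0" "\<nu>^2 > 0"
    using b \<open>\<nu> \<noteq> 0\<close> by (simp_all add: mult_nonpos_nonneg)
  then have neg: "(1-b)*\<mu>^2 - \<nu>^2 < 0"
    by linarith
  then have "((1-b)*\<mu>^2 - \<nu>^2)*a3^2 \<le> 0"
    by (simp add: mult_nonpos_nonneg)
  moreover have "b*\<nu>^2*(a1^2 + a2^2) \<ge> 0"
    using b by simp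
  ultimately have "a3^2 = 0" "a1^2 + a2^2 = 0"
    using C neg b \<open>\<nu> \<noteq> 0\<close> by simp_all
  then have "a1 = 0" "a2 = 0" "a3 = 0"
    by (simp_all add: add_nonneg_eq_0_iff)
  with E3 E5 E6 \<open>\<mu> \<noteq> 0\<close> \<open>\<nu> \<noteq> 0\<close> show ?thesis
    by simp
qed

text \<open>In the regular case \<open>(a1, a6)\<close> and \<open>(a2, -a5)\<close> solve the same 2x2 system, whose
  determinant is \<open>(2b\<beta> - \<mu>)\<mu> + \<nu>^2\<close>.\<close>

lemma prolate_lagrange_cases:
  fixes a1 a2 a3 a4 a5 a6 \<alpha> \<beta> \<mu> \<nu> b :: real
  assumes b: "b > 1"
    and N: "a1^2 + a2^2 + a3^2 + a4^2 + a5^2 + a6^2 = 1"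
    and P: "a1*a6 - a2*a5 + a3*a4 = 0"
    and nz: "(\<alpha>, \<beta>) \<noteq> (0, 0)"
    and E1: "2*b*\<beta>*a1 = \<mu>*a1 + \<nu>*a6" and E2: "2*b*\<beta>*a2 = \<mu>*a2 - \<nu>*a5"
    and E3: "2*\<beta>*a3 = \<mu>*a3 + \<nu>*a4" and E4: "\<alpha> = \<mu>*a4 + \<nu>*a3"
    and E5: "0 = \<mu>*a5 - \<nu>*a2" and E6: "0 = \<mu>*a6 + \<nu>*a1"
  shows "(a4 = 0 \<and> b*a1^2 + b*a2^2 + a3^2 = 1) \<or> b*a1^2 + b*a2^2 + a3^2 = 0
    \<or> b*a1^2 + b*a2^2 + a3^2 = b*(1 - a4^2)"
proof -
  consider (regular) "(2*b*\<beta> - \<mu>)*\<mu> + \<nu>^2 \<noteq> 0"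
    | (diagonal) "(2*b*\<beta> - \<mu>)*\<mu> + \<nu>^2 = 0" "\<nu> = 0"
    | (degenerate) "(2*b*\<beta> - \<mu>)*\<mu> + \<nu>^2 = 0" "\<nu> \<noteq> 0"
    by blast
  then show ?thesis
  proof cases
    case regular
    have "2*b*\<beta>*a2 = \<mu>*a2 + \<nu>*(- a5)" "0 = \<mu>*(- a5) + \<nu>*a2"
      using E2 E5 by simp_all
    from regular_2x2_system_eq_0[OF this regular] regular_2x2_system_eq_0[OF E1 E6 regular]
    have "a1 = 0" "a2 = 0" "a5 = 0" "a6 = 0"
      by simp_all
    with P N have "a3*a4 = 0" "a3^2 + a4^2 = 1"
      by simp_all
    then consider "a3 = 0" "a4^2 = 1" | "a4 = 0" "a3^2 = 1"
      by fastforce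
    then show ?thesis
      using \<open>a1 = 0\<close> \<open>a2 = 0\<close> by cases simp_all
  next
    case diagonal
    then have "(2*b*\<beta> - \<mu>)*\<mu> = 0"
      by simp
    then consider "\<mu> = 0" | "\<mu> = 2*b*\<beta>" "\<beta> \<noteq> 0"
      by fastforce
    then show ?thesis
    proof cases
      case 1
      with E4 diagonal nz have "\<beta> \<noteq> 0"
        by simp
      with E1 E2 E3 1 diagonal b have "a1 = 0" "a2 = 0" "a3 = 0"
        by simp_all
      then show ?thesis
        by simp
    next
      case 2
      with E3 diagonal have "2*\<beta>*(b - 1)*a3 = 0"
        by (simp add: algebra_simps)
      with 2 b have "a3 = 0"
        by simp
      moreover from E5 E6 2 b diagonal have "a5 = 0" "a6 = 0"
        by simp_all
      ultimately have "a1^2 + a2^2 = 1 - a4^2"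
        using N by simp
      then show ?thesis
        using \<open>a3 = 0\<close> by (simp flip: distrib_left)
    qed
  next
    case degenerate
    from prolate_lagrange_degenerate[OF less_imp_le[OF b] P E3 E5 E6 degenerate] N
    show ?thesis
      by simp
  qed
qed

text \<open>The multiplier equations are the components of \<open>c = \<mu> p + \<nu> \<star>p\<close>, where
  \<open>c = (2b\<beta> p1, 2b\<beta> p2, 2\<beta> p3, \<alpha>, 0, 0)\<close> represents the covector \<open>(\<alpha>, \<beta>)\<close> composed with
  the differential of the momentum map.\<close>

lemma critical_point_lagrange:
  assumes "critical_point b (1/2) p"
  obtains \<alpha> \<beta> \<mu> \<nu> :: real where "(\<alpha>, \<beta>) \<noteq> (0, 0)"
    "2*b*\<beta>*p$1 = \<mu>*p$1 + \<nu>*p$6" "2*b*\<beta>*p$2 = \<mu>*p$2 - \<nu>*p$5"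
    "2*\<beta>*p$3 = \<mu>*p$3 + \<nu>*p$4" "\<alpha> = \<mu>*p$4 + \<nu>*p$3"
    "0 = \<mu>*p$5 - \<nu>*p$2" "0 = \<mu>*p$6 + \<nu>*p$1"
proof -
  let ?DM = "frechet_derivative (momentum b) (at p)"
  have DM: "?DM = (\<lambda>v. (v$4, 2*b*p$1 * v$1 + 2*b*p$2 * v$2 + 2*p$3 * v$3))"
    by (rule frechet_derivative_at[OF has_derivative_momentum, symmetric])
  have "linear ?DM"
    unfolding DM by (rule has_derivative_linear[OF has_derivative_momentum])
  moreover have "?DM ` tangent_space p \<noteq> UNIV"
    using assms by (simp add: critical_point_def)
  ultimately obtain w :: "real \<times> real"
    where "w \<noteq> 0" and w: "\<And>v. v \<in> tangent_space p \<Longrightarrow> w \<bullet> ?DM v = 0"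
    using exists_annihilator_if_image_not_UNIV[OF _ subspace_tangent_space] by blast
  obtain \<alpha> \<beta> where w_eq: "w = (\<alpha>, \<beta>)"
    by (cases w)
  define c where "c = so4_vec (2*b*\<beta>*p$1) (2*b*\<beta>*p$2) (2*\<beta>*p$3) \<alpha> 0 0"
  define \<mu> where "\<mu> = c \<bullet> p"
  define \<nu> where "\<nu> = c \<bullet> hodge_star p"
  have "p \<bullet> p = 1" "p \<bullet> hodge_star p = 0"
    using assms by (simp_all add: critical_point_def Mh_half_iff)
  moreover have "c \<bullet> v = 0" if "p \<bullet> v = 0" "hodge_star p \<bullet> v = 0" for v
  proof -
    have "w \<bullet> ?DM v = 0"
      using w that by (simp add: tangent_space_eq)
    then show ?thesis
      by (simp add: DM w_eq c_def inner_so4 algebra_simps)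
  qed
  ultimately have comb: "c = \<mu> *\<^sub>R p + \<nu> *\<^sub>R hodge_star p"
    unfolding \<mu>_def \<nu>_def by (intro eq_combination_if_orthogonal_complement) simp_all
  have "c $ i = \<mu> * p $ i + \<nu> * hodge_star p $ i" for i
    using arg_cong[OF comb, of "\<lambda>x. x $ i"] by simp
  from this[of 1] this[of 2] this[of 3] this[of 4] this[of 5] this[of 6] \<open>w \<noteq> 0\<close>
  show ?thesis
    by (intro that[of \<alpha> \<beta> \<mu> \<nu>]) (simp_all add: c_def hodge_star_def w_eq zero_prod_def)
qed

lemma critical_point_cases:
  assumes "b > 1" "critical_point b (1/2) p"
  shows "(l23 p = 0 \<and> Gpro b p = 1) \<or> Gpro b p = 0 \<or> Gpro b p = b * (1 - (l23 p)^2)"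
proof -
  have "p \<in> Mh (1/2)"
    using assms(2) by (simp add: critical_point_def)
  then have N: "(p$1)^2 + (p$2)^2 + (p$3)^2 + (p$4)^2 + (p$5)^2 + (p$6)^2 = 1"
    and P: "p$1 * p$6 - p$2 * p$5 + p$3 * p$4 = 0"
    by (simp_all add: Mh_def casimir_norm_def casimir_pf_def
        l12_def l13_def l14_def l23_def l24_def l34_def)
  obtain \<alpha> \<beta> \<mu> \<nu> where "(\<alpha>, \<beta>) \<noteq> (0, 0)"
    "2*b*\<beta>*p$1 = \<mu>*p$1 + \<nu>*p$6" "2*b*\<beta>*p$2 = \<mu>*p$2 - \<nu>*p$5"
    "2*\<beta>*p$3 = \<mu>*p$3 + \<nu>*p$4" "\<alpha> = \<mu>*p$4 + \<nu>*p$3"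
    "0 = \<mu>*p$5 - \<nu>*p$2" "0 = \<mu>*p$6 + \<nu>*p$1"
    using critical_point_lagrange[OF assms(2)] .
  from prolate_lagrange_cases[OF assms(1) N P this] show ?thesis
    by (simp add: Gpro_def l12_def l13_def l14_def l23_def)
qed

lemma critical_point_unit_l14: "critical_point b (1/2) (so4_vec 0 0 1 0 0 0)"
  unfolding critical_point_def
proof
  show "so4_vec 0 0 1 0 0 0 \<in> Mh (1/2)"
    by (simp add: Mh_half_iff inner_so4 hodge_star_def)
  have "(1, 0) \<notin> frechet_derivative (momentum b) (at (so4_vec 0 0 1 0 0 0))
      ` tangent_space (so4_vec 0 0 1 0 0 0)"
    by (auto simp: frechet_derivative_at[OF has_derivative_momentum, symmetric]
        tangent_space_eq inner_so4 hodge_star_def)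
  then show "frechet_derivative (momentum b) (at (so4_vec 0 0 1 0 0 0))
      ` tangent_space (so4_vec 0 0 1 0 0 0) \<noteq> UNIV"
    by blast
qed

lemma Gpro_bounds:
  assumes "b \<ge> 1" "p \<in> Mh (1/2)"
  shows "0 \<le> Gpro b p" "Gpro b p \<le> b * (1 - (l23 p)^2)"
proof -
  have "(l12 p)^2 + (l13 p)^2 + (l14 p)^2 + (l23 p)^2 + (l24 p)^2 + (l34 p)^2 = 1"
    using assms(2) by (simp add: Mh_def casimir_norm_def)
  then have eq: "1 - (l23 p)^2 = (l12 p)^2 + (l13 p)^2 + (l14 p)^2 + (l24 p)^2 + (l34 p)^2"
    by linarith
  have "b * (1 - (l23 p)^2) - Gpro b p = (b - 1) * (l14 p)^2 + b * ((l24 p)^2 + (l34 p)^2)"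
    unfolding eq Gpro_def by (simp add: algebra_simps)
  moreover have "0 \<le> (b - 1) * (l14 p)^2 + b * ((l24 p)^2 + (l34 p)^2)"
    using assms(1) by simp
  ultimately show "Gpro b p \<le> b * (1 - (l23 p)^2)"
    by linarith
  show "0 \<le> Gpro b p"
    using assms(1) by (simp add: Gpro_def)
qed

lemma momentum_image:
  assumes "b \<ge> 1"
  shows "momentum b ` Mh (1/2) = {(x, g). 0 \<le> g \<and> g \<le> b * (1 - x^2)}"
proof
  show "momentum b ` Mh (1/2) \<subseteq> {(x, g). 0 \<le> g \<and> g \<le> b * (1 - x^2)}"
    using Gpro_bounds[OF assms] by (auto simp: momentum_def)
  show "{(x, g). 0 \<le> g \<and> g \<le> b * (1 - x^2)} \<subseteq> momentum b ` Mh (1/2)"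
  proof clarify
    fix x g :: real
    assume "0 \<le> g" "g \<le> b * (1 - x^2)"
    with assms have "0 \<le> g / b" "g / b \<le> 1 - x^2"
      by (simp_all add: pos_divide_le_eq mult.commute)
    define p where "p = so4_vec (sqrt (g / b)) 0 0 x (sqrt (1 - x^2 - g / b)) 0"
    have "p \<in> Mh (1/2)"
      using \<open>0 \<le> g / b\<close> \<open>g / b \<le> 1 - x^2\<close>
      by (simp add: p_def Mh_half_iff inner_so4 hodge_star_def power2_eq_square[symmetric])
    moreover have "momentum b p = (x, g)"
      using \<open>0 \<le> g / b\<close> assms by (simp add: p_def momentum_def Gpro_def l12_def l13_def l14_def l23_def)
    ultimately show "(x, g) \<in> momentum b ` Mh (1/2)"
      by (metis image_eqI)
  qed
qed

lemma isolated_critical_valueI: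
  assumes "critical_value b h c" "closed K" "c \<notin> K"
    and "\<And>c'. critical_value b h c' \<Longrightarrow> c' = c \<or> c' \<in> K"
  shows "isolated_critical_value b h c"
proof -
  obtain e where "e > 0" "ball c e \<subseteq> - K"
    using assms(2,3) open_contains_ball[of "- K"] by (auto simp: open_Compl)
  have "\<not> critical_value b h c'" if "c' \<noteq> c" "dist c' c < e" for c'
  proof
    assume "critical_value b h c'"
    with assms(4) that(1) have "c' \<in> K"
      by blast
    moreover have "c' \<in> ball c e"
      using that(2) by (simp add: dist_commute)
    ultimately show False
      using \<open>ball c e \<subseteq> - K\<close> by blast
  qed
  with assms(1) \<open>e > 0\<close> show ?thesis
    unfolding isolated_critical_value_def by blast
qed

theorem proposition4:
  fixes b :: real
  assumes "b > 1"
  shows "momentum b ` Mh (1/2) = {(x, g). 0 \<le> g \<and> g \<le> b * (1 - x^2)}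
    \<and> isolated_critical_value b (1/2) (0, 1)"
proof
  show "momentum b ` Mh (1/2) = {(x, g). 0 \<le> g \<and> g \<le> b * (1 - x^2)}"
    using assms by (simp add: momentum_image)
  let ?K = "{z. snd z = 0} \<union> {z. snd z = b * (1 - (fst z)^2)}"
  show "isolated_critical_value b (1/2) (0, 1)"
  proof (rule isolated_critical_valueI[where K = ?K])
    show "critical_value b (1/2) (0, 1)"
      using critical_point_unit_l14 unfolding critical_value_def
      by (force simp: momentum_def Gpro_def l12_def l13_def l14_def l23_def)
    show "closed ?K"
      by (intro closed_Un closed_Collect_eq continuous_intros)
    show "(0, 1) \<notin> ?K"
      using assms by simp
    show "c' = (0, 1) \<or> c' \<in> ?K" if crit: "critical_value b (1/2) c'" for c'
    proof -
      obtain p where "critical_point b (1/2) p" "momentum b p = c'"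
        using crit unfolding critical_value_def by blast
      with critical_point_cases[OF assms this(1)] show ?thesis
        by (auto simp: momentum_def)
    qed
  qed
qed

end
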